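(* Let $\beta>0$, $\alpha=1/\beta$, $n\ge1$, and let $\sigma:\mathbb{R}\to\mathbb{R}$ be either ReLU, $\sigma(t)=\max(0,t)$, or LeakyReLU, $\sigma(t)=\max(kt,t)$ with fixed $k\in(0,1)$, applied coordinatewise to vectors. Let $\mathbf{x}^{n,\beta}\in\mathbb{H}^{n,\beta}$ and $\mathbf{x}^{n,\alpha}=p_{\mathbb{H}^{n,\beta}\to\mathbb{D}^{n,\alpha}}(\mathbf{x}^{n,\beta})$. Then the Lorentzian pointwise non-linearity and the M\"obius pointwise non-linearity are equivalent: $$p_{\mathbb{H}^{n,\beta}\to\mathbb{D}^{n,\alpha}}\big(\sigma^{\otimes^\beta}(\mathbf{x}^{n,\beta})\big)=\sigma^{\otimes^\alpha}(\mathbf{x}^{n,\alpha}).$$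
   Context: Lorentzian scalar product on $\mathbb{R}^{n+1}$: $\langle \mathbf{x},\mathbf{y}\rangle_{\mathcal{L}}=-x_0y_0+\sum_{i=1}^n x_iy_i$, $\|\mathbf{v}\|_{\mathcal{L}}=\sqrt{\langle\mathbf{v},\mathbf{v}\rangle_{\mathcal{L}}}$. Hyperboloid model $\mathbb{H}^{n,\beta}=\{\mathbf{x}\in\mathbb{R}^{n+1}:\langle\mathbf{x},\mathbf{x}\rangle_{\mathcal{L}}=-\beta,\ x_0>0\}$ with origin $\mathbf{0}=(\sqrt{\beta},0,\dots,0)$; tangent space at origin $\{\mathbf{v}\in\mathbb{R}^{n+1}:v_0=0\}$. Distance $d^\beta_{\mathbb{H}}(\mathbf{x},\mathbf{y})=\sqrt{\beta}\,\mathrm{arcosh}(-\langle\mathbf{x},\mathbf{y}\rangle_{\mathcal{L}}/\beta)$. Exponential map at origin: $\exp^\beta_{\mathbf{0}}(\mathbf{v})=\cosh(\|\mathbf{v}\|_{\mathcal{L}}/\sqrt{\beta})\mathbf{0}+\sqrt{\beta}\sinh(\|\mathbf{v}\|_{\mathcal{L}}/\sqrt{\beta})\mathbf{v}/\|\mathbf{v}\|_{\mathcal{L}}$ for $\mathbf{v}\ne0$, $\exp^\beta_{\mathbf{0}}(0)=\mathbf{0}$. Logarithmic map at origin: $\log^\beta_{\mathbf{0}}(\mathbf{y})=d^\beta_{\mathbb{H}}(\mathbf{0},\mathbf{y})\frac{\mathbf{y}+\frac1\beta\langle\mathbf{0},\mathbf{y}\rangle_{\mathcal{L}}\mathbf{0}}{\|\mathbf{y}+\frac1\beta\langle\mathbf{0},\mathbf{y}\rangle_{\mathcal{L}}\mathbf{0}\|_{\mathcal{L}}}$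 for $\mathbf{y}\ne\mathbf{0}$, $\log^\beta_{\mathbf{0}}(\mathbf{0})=0$. Lorentzian pointwise non-linearity: writing $\log^\beta_{\mathbf{0}}(\mathbf{x})=(v_0,\dots,v_n)$, $\sigma^{\otimes^\beta}(\mathbf{x})=\exp^\beta_{\mathbf{0}}\big((0,\sigma(v_1),\dots,\sigma(v_n))\big)$. Poincar\'e ball $\mathbb{D}^{n,\alpha}=\{\mathbf{x}\in\mathbb{R}^n:\alpha\|\mathbf{x}\|^2<1\}$ with $\exp^\alpha_{\mathbf{0}}(\mathbf{v})=\tanh(\sqrt{\alpha}\|\mathbf{v}\|)\frac{\mathbf{v}}{\sqrt{\alpha}\|\mathbf{v}\|}$ and $\log^\alpha_{\mathbf{0}}(\mathbf{y})=\tanh^{-1}(\sqrt{\alpha}\|\mathbf{y}\|)\frac{\mathbf{y}}{\sqrt{\alpha}\|\mathbf{y}\|}$ for nonzero arguments, both mapping $0$ to $0$. M\"obius pointwise non-linearity: $\sigma^{\otimes^\alpha}(\mathbf{x})=\exp^\alpha_{\mathbf{0}}(\sigma(\log^\alpha_{\mathbf{0}}(\mathbf{x})))$. Isometry $p_{\mathbb{H}^{n,\beta}\to\mathbb{D}^{n,\alpha}}(x_0,x_1,\dots,x_n)=\frac{\sqrt{\beta}(x_1,\dots,x_n)}{\sqrt{\beta}+x_0}$. *)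

theory Defs
  imports Complex_Main
begin

text \<open>Vectors of R^(n+1) and R^n are represented as real lists of length n+1 resp. n.
  For a list x of length n+1, x!0 is the time-like coordinate x_0.\<close>

definition vadd :: "real list \<Rightarrow> real list \<Rightarrow> real list" where
  "vadd x y = map2 (+) x y"

definition vscale :: "real \<Rightarrow> real list \<Rightarrow> real list" where
  "vscale c x = map (\<lambda>a. c * a) x"

definition lor_inner :: "real list \<Rightarrow> real list \<Rightarrow> real" where
  "lor_inner x y = - (x!0 * y!0) + (\<Sum>i = 1..<length x. x!i * y!i)"

definition lor_norm :: "real list \<Rightarrow> real" where
  "lor_norm v = sqrt (lor_inner v v)"

definition hyperboloid :: "nat \<Rightarrow> real \<Rightarrow> real list set" where
  "hyperboloid n \<beta> = {x. length x = n + 1 \<and> lor_inner x x = - \<beta> \<and> x!0 > 0}"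

definition H_origin :: "nat \<Rightarrow> real \<Rightarrow> real list" where
  "H_origin n \<beta> = sqrt \<beta> # replicate n 0"

definition H_dist :: "real \<Rightarrow> real list \<Rightarrow> real list \<Rightarrow> real" where
  "H_dist \<beta> x y = sqrt \<beta> * arcosh (- lor_inner x y / \<beta>)"

definition H_exp0 :: "nat \<Rightarrow> real \<Rightarrow> real list \<Rightarrow> real list" where
  "H_exp0 n \<beta> v =
     (if v = replicate (n + 1) 0 then H_origin n \<beta>
      else vadd (vscale (cosh (lor_norm v / sqrt \<beta>)) (H_origin n \<beta>))
                (vscale (sqrt \<beta> * sinh (lor_norm v / sqrt \<beta>) / lor_norm v) v))"

definition H_log0 :: "nat \<Rightarrow> real \<Rightarrow> real list \<Rightarrow> real list" where
  "H_log0 n \<beta> y =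
     (if y = H_origin n \<beta> then replicate (n + 1) 0
      else (let u = vadd y (vscale (lor_inner (H_origin n \<beta>) y / \<beta>) (H_origin n \<beta>))
            in vscale (H_dist \<beta> (H_origin n \<beta>) y / lor_norm u) u))"

definition lor_nonlin :: "nat \<Rightarrow> real \<Rightarrow> (real \<Rightarrow> real) \<Rightarrow> real list \<Rightarrow> real list" where
  "lor_nonlin n \<beta> \<sigma> x = (let v = H_log0 n \<beta> x in H_exp0 n \<beta> (0 # map \<sigma> (tl v)))"

definition enorm :: "real list \<Rightarrow> real" where
  "enorm x = sqrt (\<Sum>i<length x. (x!i)^2)"

definition D_exp0 :: "real \<Rightarrow> real list \<Rightarrow> real list" where
  "D_exp0 \<alpha> v = (if v = replicate (length v) 0 then v
      else vscale (tanh (sqrt \<alpha> * enorm v) / (sqrt \<alpha> * enorm v)) v)"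

definition D_log0 :: "real \<Rightarrow> real list \<Rightarrow> real list" where
  "D_log0 \<alpha> y = (if y = replicate (length y) 0 then y
      else vscale (artanh (sqrt \<alpha> * enorm y) / (sqrt \<alpha> * enorm y)) y)"

definition mob_nonlin :: "real \<Rightarrow> (real \<Rightarrow> real) \<Rightarrow> real list \<Rightarrow> real list" where
  "mob_nonlin \<alpha> \<sigma> x = D_exp0 \<alpha> (map \<sigma> (D_log0 \<alpha> x))"

definition p_HD :: "real \<Rightarrow> real list \<Rightarrow> real list" where
  "p_HD \<beta> x = map (\<lambda>a. sqrt \<beta> * a / (sqrt \<beta> + x!0)) (tl x)"

end

theory Submission
  imports Defs
begin

text \<open>A point of the hyperboloid is exp_0 of a tangent vector (0, w), and the isometry p carries
  exp_0 (0, w) to the exponential map of the ball at w / 2: with s = |w| / sqrt beta both sides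
  are multiples of w, and they agree by the half-angle formula tanh (s/2) = sinh s / (1 + cosh s).
  Since log_0 inverts exp_0 on the ball, the Lorentzian non-linearity applies sigma to w and the
  Moebius one applies it to w / 2; these agree because ReLU and LeakyReLU are positively
  homogeneous.\<close>

lemma length_vscale [simp]: "length (vscale c v) = length v"
  by (simp add: vscale_def)

lemma vscale_Cons: "vscale c (a # v) = (c * a) # vscale c v"
  by (simp add: vscale_def)

lemma vscale_vscale: "vscale a (vscale b v) = vscale (a * b) v"
  by (simp add: vscale_def)

lemma vscale_one [simp]: "vscale 1 v = v"
  by (simp add: vscale_def)

lemma vscale_replicate_0 [simp]: "vscale c (replicate n 0) = replicate n 0"
  by (simp add: vscale_def)

lemma vscale_eq_replicate_0_iff:
  "vscale c v = replicate (length v) 0 \<longleftrightarrow> c = 0 \<or> v = replicate (length v) 0"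
  by (auto simp: vscale_def list_eq_iff_nth_eq)

lemma vadd_Cons: "vadd (a # v) (b # w) = (a + b) # vadd v w"
  by (simp add: vadd_def)

lemma vadd_replicate_0_left: "length v = n \<Longrightarrow> vadd (replicate n 0) v = v"
  by (induction v arbitrary: n) (auto simp: vadd_def)

lemma vadd_replicate_0_right: "length v = n \<Longrightarrow> vadd v (replicate n 0) = v"
  by (induction v arbitrary: n) (auto simp: vadd_def)

lemma enorm_nonneg: "0 \<le> enorm v"
  by (simp add: enorm_def sum_nonneg)

lemma enorm_power2: "(enorm v)\<^sup>2 = (\<Sum>i<length v. (v ! i)\<^sup>2)"
  by (simp add: enorm_def sum_nonneg)

lemma enorm_eq_0_iff: "enorm v = 0 \<longleftrightarrow> v = replicate (length v) 0"
  by (auto simp: enorm_def sum_nonneg_eq_0_iff list_eq_iff_nth_eq)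

lemma enorm_vscale: "enorm (vscale c v) = \<bar>c\<bar> * enorm v"
  by (simp add: enorm_def vscale_def power_mult_distrib sum_distrib_left[symmetric] real_sqrt_mult)

lemma lor_inner_Cons:
  assumes "length v = length w"
  shows "lor_inner (a # v) (b # w) = (\<Sum>i<length v. v ! i * w ! i) - a * b"
proof -
  have "(\<Sum>i = 1..<length (a # v). (a # v) ! i * (b # w) ! i)
      = (\<Sum>i = Suc 0..<Suc (length v). (a # v) ! i * (b # w) ! i)"
    by simp
  also have "\<dots> = (\<Sum>i = 0..<length v. (a # v) ! Suc i * (b # w) ! Suc i)"
    by (rule sum.shift_bounds_Suc_ivl)
  finally show ?thesis
    by (simp add: lor_inner_def atLeast0LessThan)
qed

lemma lor_inner_Cons_self: "lor_inner (a # v) (a # v) = (enorm v)\<^sup>2 - a\<^sup>2"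
  using enorm_power2[of v] by (simp add: lor_inner_Cons power2_eq_square)

lemma lor_norm_Cons_0: "lor_norm (0 # v) = enorm v"
  by (simp add: lor_norm_def lor_inner_Cons_self enorm_nonneg)

lemma Cons_mem_hyperboloid_iff:
  "x0 # xs \<in> hyperboloid n \<beta> \<longleftrightarrow> length xs = n \<and> 0 < x0 \<and> x0\<^sup>2 = \<beta> + (enorm xs)\<^sup>2"
  by (auto simp: hyperboloid_def lor_inner_Cons_self)

lemma hyperboloid_Cons_polar:
  assumes "x0 # xs \<in> hyperboloid n \<beta>" and "0 < \<beta>"
  obtains d where "0 \<le> d" "x0 = sqrt \<beta> * cosh d" "enorm xs = sqrt \<beta> * sinh d"
proof
  define q where "q = x0 / sqrt \<beta>"
  have "0 < x0" and x0: "x0\<^sup>2 = \<beta> + (enorm xs)\<^sup>2"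
    using assms(1) by (auto simp: Cons_mem_hyperboloid_iff)
  have q2: "q\<^sup>2 - 1 = (enorm xs / sqrt \<beta>)\<^sup>2"
    using assms(2) by (simp add: q_def power_divide x0 field_simps)
  have "1 \<le> q"
  proof (rule power2_le_imp_le)
    show "1\<^sup>2 \<le> q\<^sup>2"
      using q2 zero_le_power2[of "enorm xs / sqrt \<beta>"] unfolding power_one by linarith
    show "0 \<le> q"
      using \<open>0 < x0\<close> assms(2) by (simp add: q_def)
  qed
  show "0 \<le> arcosh q"
    using \<open>1 \<le> q\<close> by simp
  show "x0 = sqrt \<beta> * cosh (arcosh q)"
    using \<open>1 \<le> q\<close> assms(2) by (simp add: q_def)
  show "enorm xs = sqrt \<beta> * sinh (arcosh q)"
    using \<open>1 \<le> q\<close> assms(2) by (simp add: sinh_arcosh_real q2 enorm_nonneg)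
qed

lemma H_exp0_Cons_0:
  assumes "length w = n" and "w \<noteq> replicate n 0"
  shows "H_exp0 n \<beta> (0 # w)
    = sqrt \<beta> * cosh (enorm w / sqrt \<beta>) # vscale (sqrt \<beta> * sinh (enorm w / sqrt \<beta>) / enorm w) w"
  using assms
  by (simp add: H_exp0_def H_origin_def lor_norm_Cons_0 vscale_Cons vadd_Cons vadd_replicate_0_left)

lemma H_log0_Cons:
  assumes "0 < \<beta>" and "length xs = n" and "xs \<noteq> replicate n 0"
  shows "H_log0 n \<beta> (x0 # xs) = 0 # vscale (sqrt \<beta> * arcosh (x0 / sqrt \<beta>) / enorm xs) xs"
proof -
  have inner: "lor_inner (H_origin n \<beta>) (x0 # xs) = - (sqrt \<beta> * x0)"
    using assms(2) by (simp add: H_origin_def lor_inner_Cons)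
  have scale: "sqrt \<beta> * x0 / \<beta> = x0 / sqrt \<beta>"
    using assms(1) by (simp add: field_simps)
  have "vadd (x0 # xs) (vscale (lor_inner (H_origin n \<beta>) (x0 # xs) / \<beta>) (H_origin n \<beta>)) = 0 # xs"
    unfolding inner using assms(1,2) by (simp add: scale H_origin_def vscale_Cons vadd_Cons vadd_replicate_0_right)
  moreover have "H_dist \<beta> (H_origin n \<beta>) (x0 # xs) = sqrt \<beta> * arcosh (x0 / sqrt \<beta>)"
    by (simp add: H_dist_def inner scale)
  ultimately show ?thesis
    using assms(3) by (simp add: H_log0_def H_origin_def lor_norm_Cons_0 vscale_Cons)
qed

lemma H_log0_hyperboloid:
  assumes "x \<in> hyperboloid n \<beta>" and "0 < \<beta>"
  obtains w where "length w = n" and "H_log0 n \<beta> x = 0 # w" and "H_exp0 n \<beta> (0 # w) = x"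
proof -
  obtain x0 xs where x: "x = x0 # xs"
    using assms(1) by (cases x) (auto simp: hyperboloid_def)
  have n: "length xs = n"
    using assms(1) by (simp add: x Cons_mem_hyperboloid_iff)
  obtain d where "0 \<le> d" and x0: "x0 = sqrt \<beta> * cosh d" and r: "enorm xs = sqrt \<beta> * sinh d"
    using hyperboloid_Cons_polar assms unfolding x by blast
  show ?thesis
  proof (cases "xs = replicate n 0")
    case True
    then have "sinh d = 0"
      using r assms(2) n enorm_eq_0_iff[of xs] by simp
    then have "x = H_origin n \<beta>"
      using x0 True by (simp add: x H_origin_def)
    then show ?thesis
      using that[of "replicate n 0"] by (simp add: H_log0_def H_exp0_def)
  next
    case False
    then have "0 < sinh d"
      using r n assms(2) enorm_eq_0_iff[of xs] \<open>0 \<le> d\<close> by (auto simp: less_le)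
    then have "0 < d"
      using \<open>0 \<le> d\<close> by (auto simp: less_le)
    define w where "w = vscale (d / sinh d) xs"
    have "H_log0 n \<beta> x = 0 # w"
    proof -
      have "x0 / sqrt \<beta> = cosh d"
        using assms(2) by (simp add: x0)
      then have "sqrt \<beta> * arcosh (x0 / sqrt \<beta>) / enorm xs = d / sinh d"
        using \<open>0 \<le> d\<close> assms(2) by (simp add: arcosh_cosh_real r)
      then show ?thesis
        using assms(2) False n by (simp add: x H_log0_Cons w_def)
    qed
    moreover have "H_exp0 n \<beta> (0 # w) = x"
    proof -
      have "enorm w = sqrt \<beta> * d"
        using \<open>0 < sinh d\<close> \<open>0 < d\<close> by (simp add: w_def enorm_vscale r)
      moreover have "w \<noteq> replicate n 0"
        using \<open>0 < sinh d\<close> \<open>0 < d\<close> False n vscale_eq_replicate_0_iff[of "d / sinh d" xs]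
        by (simp add: w_def)
      moreover have "sqrt \<beta> * sinh d / (sqrt \<beta> * d) * (d / sinh d) = 1"
        using \<open>0 < sinh d\<close> \<open>0 < d\<close> assms(2) by simp
      ultimately show ?thesis
        using assms(2) n by (simp add: H_exp0_Cons_0 x x0 w_def vscale_vscale)
    qed
    moreover have "length w = n"
      using n by (simp add: w_def)
    ultimately show ?thesis
      using that by blast
  qed
qed

lemma p_HD_Cons: "p_HD \<beta> (h # v) = vscale (sqrt \<beta> / (sqrt \<beta> + h)) v"
  by (simp add: p_HD_def vscale_def)

lemma tanh_half_real: "tanh ((s::real) / 2) = sinh s / (1 + cosh s)"
proof -
  have "sinh s = 2 * sinh (s / 2) * cosh (s / 2)"
    using sinh_double[of "s / 2"] by simp
  moreover have "cosh s = 2 * (cosh (s / 2))\<^sup>2 - 1"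
    using cosh_double_cosh[of "s / 2"] by simp
  ultimately show ?thesis
    by (simp add: tanh_def field_simps power2_eq_square)
qed

lemma p_HD_H_exp0:
  assumes "0 < \<beta>" and "length w = n"
  shows "p_HD \<beta> (H_exp0 n \<beta> (0 # w)) = D_exp0 (1 / \<beta>) (vscale (1 / 2) w)"
proof (cases "w = replicate n 0")
  case True
  then show ?thesis
    by (simp add: H_exp0_def H_origin_def p_HD_def D_exp0_def)
next
  case False
  define s where "s = enorm w / sqrt \<beta>"
  have "0 < s"
    using False assms enorm_eq_0_iff[of w] enorm_nonneg[of w] by (simp add: s_def less_le)
  have w: "enorm w = sqrt \<beta> * s"
    using assms(1) by (simp add: s_def)
  have "sqrt \<beta> / (sqrt \<beta> + sqrt \<beta> * cosh s) * (sqrt \<beta> * sinh s / enorm w)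
      = sinh s / (1 + cosh s) / s"
  proof -
    have "sqrt \<beta> + sqrt \<beta> * cosh s = sqrt \<beta> * (1 + cosh s)"
      by (simp add: algebra_simps)
    then show ?thesis
      using assms(1) \<open>0 < s\<close> by (simp add: w)
  qed
  then have "p_HD \<beta> (H_exp0 n \<beta> (0 # w)) = vscale (sinh s / (1 + cosh s) / s) w"
    using False assms by (simp add: H_exp0_Cons_0 p_HD_Cons vscale_vscale flip: s_def)
  also have "\<dots> = vscale (tanh (s / 2) / (s / 2) * (1 / 2)) w"
    by (simp add: tanh_half_real)
  also have "\<dots> = D_exp0 (1 / \<beta>) (vscale (1 / 2) w)"
  proof -
    have half: "sqrt (1 / \<beta>) * enorm (vscale (1 / 2) w) = s / 2"
      by (simp add: enorm_vscale real_sqrt_divide s_def)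
    have "vscale (1 / 2) w \<noteq> replicate (length (vscale (1 / 2) w)) 0"
      using False assms(2) vscale_eq_replicate_0_iff[of "1 / 2" w] by simp
    then show ?thesis
      unfolding D_exp0_def half by (simp add: vscale_vscale)
  qed
  finally show ?thesis .
qed

lemma D_log0_D_exp0:
  assumes "0 < \<alpha>"
  shows "D_log0 \<alpha> (D_exp0 \<alpha> v) = v"
proof (cases "v = replicate (length v) 0")
  case True
  then show ?thesis
    by (simp add: D_exp0_def D_log0_def)
next
  case False
  define t where "t = sqrt \<alpha> * enorm v"
  have "0 < t"
    using False assms enorm_eq_0_iff[of v] enorm_nonneg[of v] by (simp add: t_def less_le)
  define y where "y = vscale (tanh t / t) v"
  have "sqrt \<alpha> * enorm y = tanh t"
    using \<open>0 < t\<close> by (simp add: y_def enorm_vscale t_def)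
  moreover have "y \<noteq> replicate (length y) 0"
    using False \<open>0 < t\<close> vscale_eq_replicate_0_iff[of "tanh t / t" v] by (simp add: y_def)
  ultimately have "D_log0 \<alpha> y = vscale (t / tanh t * (tanh t / t)) v"
    by (simp add: D_log0_def artanh_tanh_real y_def vscale_vscale)
  also have "\<dots> = v"
    using \<open>0 < t\<close> by simp
  finally show ?thesis
    using False by (simp add: D_exp0_def y_def t_def)
qed

definition positively_homogeneous :: "(real \<Rightarrow> real) \<Rightarrow> bool" where
  "positively_homogeneous f \<longleftrightarrow> (\<forall>c t. 0 \<le> c \<longrightarrow> f (c * t) = c * f t)"

lemma positively_homogeneous_leaky_relu: "positively_homogeneous (\<lambda>t. max (k * t) t)"
  by (simp add: positively_homogeneous_def max_mult_distrib_left mult.left_commute)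

lemma positively_homogeneous_relu: "positively_homogeneous (\<lambda>t. max 0 t)"
  using positively_homogeneous_leaky_relu[of 0] by simp

lemma map_vscale_positively_homogeneous:
  "positively_homogeneous f \<Longrightarrow> 0 \<le> c \<Longrightarrow> map f (vscale c v) = vscale c (map f v)"
  by (simp add: positively_homogeneous_def vscale_def)

theorem theorem3p3:
  fixes \<beta> \<alpha> :: real and n :: nat and \<sigma> :: "real \<Rightarrow> real" and x :: "real list"
  assumes "\<beta> > 0" and "\<alpha> = 1 / \<beta>" and "n \<ge> 1"
    and "\<sigma> = (\<lambda>t. max 0 t) \<or> (\<exists>k. 0 < k \<and> k < 1 \<and> \<sigma> = (\<lambda>t. max (k * t) t))"
    and "x \<in> hyperboloid n \<beta>"
  shows "p_HD \<beta> (lor_nonlin n \<beta> \<sigma> x) = mob_nonlin \<alpha> \<sigma> (p_HD \<beta> x)"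
proof -
  have \<sigma>: "positively_homogeneous \<sigma>"
    using assms(4) positively_homogeneous_relu positively_homogeneous_leaky_relu by blast
  obtain w where w: "length w = n" "H_log0 n \<beta> x = 0 # w" "H_exp0 n \<beta> (0 # w) = x"
    using H_log0_hyperboloid assms(1,5) by blast
  have "p_HD \<beta> x = D_exp0 \<alpha> (vscale (1 / 2) w)"
    using p_HD_H_exp0[OF assms(1) w(1)] by (simp add: w(3) assms(2))
  then have "mob_nonlin \<alpha> \<sigma> (p_HD \<beta> x) = D_exp0 \<alpha> (vscale (1 / 2) (map \<sigma> w))"
    using assms(1,2) \<sigma> by (simp add: mob_nonlin_def D_log0_D_exp0 map_vscale_positively_homogeneous)
  also have "\<dots> = p_HD \<beta> (lor_nonlin n \<beta> \<sigma> x)"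
    using p_HD_H_exp0[OF assms(1), of "map \<sigma> w"] w by (simp add: lor_nonlin_def assms(2))
  finally show ?thesis ..
qed

end
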